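(* Let $\lambda\in\mathcal P_\epsilon(N)$ and let $\mathbf i=(i_1,\dots,i_l)$ be an admissible sequence for $\lambda$; if $\epsilon=1$ assume in addition that $N-2\sum_{j=1}^l i_j\ne2$. Then $(i_{\sigma(1)},\dots,i_{\sigma(l)})$ is an admissible sequence for $\lambda$ for every permutation $\sigma$ of $\{1,\dots,l\}$.
   Context: $\mathcal P_\epsilon(N)$ ($\epsilon=\pm1$) is the set of partitions $\lambda=(\lambda_1\ge\dots\ge\lambda_n\ge1)$ of $N$ in which every part $m$ with $\epsilon(-1)^m=1$ occurs with even multiplicity; conventions $\lambda_0=0$, $\lambda_i=0$ for $i>n$. A 2-step of $\lambda$ is a pair $(i,i+1)$, $1\le i<n$, with $\epsilon(-1)^{\lambda_i}=\epsilon(-1)^{\lambda_{i+1}}=-1$, $\lambda_{i-1}\ne\lambda_i$, $\lambda_{i+1}\ne\lambda_{i+2}$; $\Delta(\lambda)$ is the set of 2-steps. KS algorithm: for $1\le i\le n$, Case 1 occurs at $i$ if $\lambda_i\ge\lambda_{i+1}+2$, and then $\lambda^{(i)}=(\lambda_1-2,\dots,\lambda_i-2,\lambda_{i+1},\dots,\lambda_n)$; Case 2 occurs at $i$ if $(i,i+1)\in\Delta(\lambda)$ and $\lambda_i=\lambda_{i+1}$, and then $\lambda^{(i)}=(\lambda_1-2,\dots,\lambda_{i-1}-2,\lambda_i-1,\lambda_{i+1}-1,\lambda_{i+2},\dots,\lambda_n)$; zero parts discarded, $\lambda^{(i)}\in\mathcal P_\epsilon(N-2i)$. A sequence $(i_1,\dots,i_l)$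 is admissible for $\lambda$ if for each $k$ Case 1 or Case 2 occurs at $i_k$ for $\lambda^{(i_1,\dots,i_{k-1})}$, where $\lambda^\emptyset=\lambda$ and $\lambda^{(i_1,\dots,i_k)}=(\lambda^{(i_1,\dots,i_{k-1})})^{(i_k)}$. *)

theory Defs
  imports Main "HOL-Combinatorics.Permutations"
begin

text \<open>Partitions are represented as lists of naturals (lam!0 = lambda_1, ...).
  epsilon is an integer assumed to be 1 or -1.\<close>

definition in_P :: "int \<Rightarrow> nat \<Rightarrow> nat list \<Rightarrow> bool" where
  "in_P eps N lam \<longleftrightarrow> sorted_wrt (\<ge>) lam \<and> (\<forall>m\<in>set lam. m \<ge> 1) \<and> sum_list lam = N \<and>
     (\<forall>m\<in>set lam. eps * (-1) ^ m = 1 \<longrightarrow> even (count_list lam m))"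

definition part :: "nat list \<Rightarrow> nat \<Rightarrow> nat" where
  "part lam i = (if i = 0 then 0 else if i \<le> length lam then lam ! (i - 1) else 0)"

definition two_step :: "int \<Rightarrow> nat list \<Rightarrow> nat \<Rightarrow> bool" where
  "two_step eps lam i \<longleftrightarrow> 1 \<le> i \<and> i < length lam \<and>
     eps * (-1) ^ part lam i = -1 \<and> eps * (-1) ^ part lam (i + 1) = -1 \<and>
     part lam (i - 1) \<noteq> part lam i \<and> part lam (i + 1) \<noteq> part lam (i + 2)"

definition case1 :: "nat list \<Rightarrow> nat \<Rightarrow> bool" where
  "case1 lam i \<longleftrightarrow> 1 \<le> i \<and> i \<le> length lam \<and> part lam i \<ge> part lam (i + 1) + 2"

definition case2 :: "int \<Rightarrow> nat list \<Rightarrow> nat \<Rightarrow> bool" where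
  "case2 eps lam i \<longleftrightarrow> 1 \<le> i \<and> i \<le> length lam \<and> two_step eps lam i \<and> part lam i = part lam (i + 1)"

text \<open>lambda^(i); index j below is 0-based, i.e. the part lambda_(j+1).\<close>
definition ks_step :: "int \<Rightarrow> nat list \<Rightarrow> nat \<Rightarrow> nat list" where
  "ks_step eps lam i =
     (if case1 lam i then
        filter (\<lambda>x. 0 < x) (map (\<lambda>j. if j < i then lam ! j - 2 else lam ! j) [0..<length lam])
      else if case2 eps lam i then
        filter (\<lambda>x. 0 < x) (map (\<lambda>j. if j + 1 < i then lam ! j - 2
                                      else if j < i + 1 then lam ! j - 1 else lam ! j) [0..<length lam])
      else lam)"

fun admissible :: "int \<Rightarrow> nat list \<Rightarrow> nat list \<Rightarrow> bool" where
  "admissible eps lam [] = True"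
| "admissible eps lam (i # is) =
     ((case1 lam i \<or> case2 eps lam i) \<and> admissible eps (ks_step eps lam i) is)"

end

theory Submission
  imports Defs
begin

text \<open>A partition is handled through its part function \<open>k \<mapsto> \<lambda>\<^sub>k\<close> (with \<open>\<lambda>\<^sub>0 = 0\<close>),
  which is antitone on \<open>k \<ge> 1\<close>. Both moves lower an initial segment of it pointwise (Case 1 by 2
  on \<open>[1, i]\<close>; Case 2 by 2 on \<open>[1, i - 1]\<close> and by 1 on \<open>{i, i + 1}\<close>), so as operations on
  functions any two moves commute. What remains is that if move \<open>j\<close> is possible after move
  \<open>i \<noteq> j\<close>, then move \<open>j\<close> is possible first and move \<open>i\<close> after it; this is a comparison of the
  parts near \<open>i\<close> and \<open>j\<close>, done separately for the four combinations of cases. Hence admissibility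
  is preserved by adjacent transpositions, which generate all permutations.\<close>

definition partition_fun :: "(nat \<Rightarrow> nat) \<Rightarrow> bool" where
  "partition_fun p \<longleftrightarrow> p 0 = 0 \<and> antimono_on {1..} p"

lemma partition_funD: "partition_fun p \<Longrightarrow> 1 \<le> x \<Longrightarrow> x \<le> y \<Longrightarrow> p y \<le> p x"
  unfolding partition_fun_def monotone_on_def by auto

lemma partition_funI:
  "p 0 = 0 \<Longrightarrow> (\<And>x y. 1 \<le> x \<Longrightarrow> x \<le> y \<Longrightarrow> p y \<le> p x) \<Longrightarrow> partition_fun p"
  unfolding partition_fun_def monotone_on_def by auto

lemma partition_fun_pred: "partition_fun p \<Longrightarrow> p k \<le> p (k - 1) \<or> p (k - 1) = 0"
  unfolding partition_fun_def monotone_on_def by (cases "k \<le> 1") (auto simp: le_Suc_eq)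

definition case1_fun :: "(nat \<Rightarrow> nat) \<Rightarrow> nat \<Rightarrow> bool" where
  "case1_fun p i \<longleftrightarrow> 1 \<le> i \<and> p (i + 1) + 2 \<le> p i"

text \<open>\<open>b\<close> is the parity of the parts of a 2-step (odd iff \<open>\<epsilon> = 1\<close>); \<open>1 \<le> a2\<close> encodes
  \<open>i < n\<close>.\<close>

definition two_step_window :: "bool \<Rightarrow> nat \<Rightarrow> nat \<Rightarrow> nat \<Rightarrow> nat \<Rightarrow> bool" where
  "two_step_window b a0 a1 a2 a3 \<longleftrightarrow>
     1 \<le> a2 \<and> odd a1 = b \<and> odd a2 = b \<and> a0 \<noteq> a1 \<and> a2 \<noteq> a3 \<and> a1 = a2"

definition case2_fun :: "bool \<Rightarrow> (nat \<Rightarrow> nat) \<Rightarrow> nat \<Rightarrow> bool" where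
  "case2_fun b p i \<longleftrightarrow> 1 \<le> i \<and> two_step_window b (p (i - 1)) (p i) (p (i + 1)) (p (i + 2))"

definition step1_fun :: "(nat \<Rightarrow> nat) \<Rightarrow> nat \<Rightarrow> nat \<Rightarrow> nat" where
  "step1_fun p i k = (if k \<le> i then p k - 2 else p k)"

definition step2_fun :: "(nat \<Rightarrow> nat) \<Rightarrow> nat \<Rightarrow> nat \<Rightarrow> nat" where
  "step2_fun p i k = (if k < i then p k - 2 else if k \<le> i + 1 then p k - 1 else p k)"

definition ks_allowed :: "bool \<Rightarrow> (nat \<Rightarrow> nat) \<Rightarrow> nat \<Rightarrow> bool" where
  "ks_allowed b p i \<longleftrightarrow> case1_fun p i \<or> case2_fun b p i"

definition ks_fun :: "(nat \<Rightarrow> nat) \<Rightarrow> nat \<Rightarrow> nat \<Rightarrow> nat" where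
  "ks_fun p i = (if case1_fun p i then step1_fun p i else step2_fun p i)"

lemma case1_fun_not_case2_fun: "case1_fun p i \<Longrightarrow> \<not> case2_fun b p i"
  unfolding case1_fun_def case2_fun_def two_step_window_def by auto

lemma odd_minus_2_iff: "odd ((m::nat) - 2) \<longleftrightarrow> 2 \<le> m \<and> odd m"
  by presburger

lemma step1_step1_commute: "step1_fun (step1_fun p i) j = step1_fun (step1_fun p j) i"
  by (auto simp: fun_eq_iff step1_fun_def)

lemma step2_step1_commute: "step2_fun (step1_fun p i) j = step1_fun (step2_fun p j) i"
  by (auto simp: fun_eq_iff step1_fun_def step2_fun_def)

lemma step2_step2_commute: "step2_fun (step2_fun p i) j = step2_fun (step2_fun p j) i"
  by (auto simp: fun_eq_iff step2_fun_def)

lemma case1_case1_swap: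
  assumes p: "partition_fun p" and "i \<noteq> j" and "case1_fun p i" and "case1_fun (step1_fun p i) j"
  shows "case1_fun p j \<and> case1_fun (step1_fun p j) i"
proof (cases "j < i")
  case True
  have "p i \<le> p (j + 1)" using partition_funD[OF p, of "j + 1" i] True by simp
  then show ?thesis using assms True unfolding case1_fun_def step1_fun_def by auto
next
  case False
  have "p j \<le> p (i + 1)" using partition_funD[OF p, of "i + 1" j] False assms(2) by simp
  then show ?thesis using assms False unfolding case1_fun_def step1_fun_def by auto
qed

lemma case1_case2_swap:
  assumes p: "partition_fun p" and "i \<noteq> j" and "case1_fun p i" and "case2_fun b (step1_fun p i) j"
  shows "case2_fun b p j \<and> case1_fun (step2_fun p j) i"
proof -
  note m = partition_funD[OF p]
  have p0: "p 0 = 0" using p by (simp add: partition_fun_def)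
  have j1: "j \<ge> 1" using assms(4) by (simp add: case2_fun_def)
  consider "j + 2 \<le> i" | "i = j + 1" | "j = i + 1" | "j \<ge> i + 2" using assms(2) by linarith
  then show ?thesis
  proof cases
    case 1
    have "p i \<le> p (j + 2)" "p i \<le> p (j + 1)" "p i \<le> p j" "j \<ge> 2 \<Longrightarrow> p i \<le> p (j - 1)"
      using m[of "j + 2" i] m[of "j + 1" i] m[of j i] m[of "j - 1" i] 1 j1 by auto
    then show ?thesis using assms 1 p0
      unfolding case1_fun_def case2_fun_def two_step_window_def step1_fun_def step2_fun_def
      by (auto simp: odd_minus_2_iff split: if_splits)
  next
    case 2
    have "p i \<le> p j" "j \<ge> 2 \<Longrightarrow> p i \<le> p (j - 1)" using m[of j i] m[of "j - 1" i] 2 j1 by auto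
    then show ?thesis using assms 2 p0
      unfolding case1_fun_def case2_fun_def two_step_window_def step1_fun_def step2_fun_def
      by (auto simp: odd_minus_2_iff split: if_splits)
  next
    case 3
    have "p (j + 1) \<le> p j" "p j \<le> p (j - 1)" "p (j + 2) \<le> p (j + 1)"
      using m[of j "j + 1"] m[of "j - 1" j] m[of "j + 1" "j + 2"] 3 assms(3)
      by (auto simp: case1_fun_def)
    then show ?thesis using assms 3
      unfolding case1_fun_def case2_fun_def two_step_window_def step1_fun_def step2_fun_def
      by (auto simp: odd_minus_2_iff split: if_splits)
  next
    case 4
    have "p (j - 1) \<le> p (i + 1)" "p (j + 1) \<le> p j" "p j \<le> p (j - 1)" "p (j + 2) \<le> p (j + 1)"
      using m[of "i + 1" "j - 1"] m[of j "j + 1"] m[of "j - 1" j] m[of "j + 1" "j + 2"] 4 by auto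
    then show ?thesis using assms 4
      unfolding case1_fun_def case2_fun_def two_step_window_def step1_fun_def step2_fun_def
      by (auto simp: odd_minus_2_iff split: if_splits)
  qed
qed

lemma case2_case1_swap:
  assumes p: "partition_fun p" and "i \<noteq> j" and "case2_fun b p i" and "case1_fun (step2_fun p i) j"
  shows "case1_fun p j \<and> case2_fun b (step1_fun p j) i"
proof -
  note m = partition_funD[OF p]
  have p0: "p 0 = 0" using p by (simp add: partition_fun_def)
  have i1: "i \<ge> 1" using assms(3) by (simp add: case2_fun_def)
  have j1: "j \<ge> 1" using assms(4) by (simp add: case1_fun_def)
  have mono_i: "p (i + 1) \<le> p i" "p (i + 2) \<le> p (i + 1)" "i \<ge> 2 \<Longrightarrow> p i \<le> p (i - 1)"
    "p (i + 3) \<le> p (i + 2)" using m i1 by auto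
  have mono_j: "p (j + 1) \<le> p j" "p (j + 2) \<le> p (j + 1)" "j \<ge> 2 \<Longrightarrow> p j \<le> p (j - 1)"
    "p (j + 3) \<le> p (j + 2)" using m j1 by auto
  consider "j + 2 \<le> i" | "i = j + 1" | "j = i + 1" | "j \<ge> i + 2" using assms(2) by linarith
  then show ?thesis
  proof cases
    case 1
    have "p (i - 1) \<le> p (j + 1)" using m[of "j + 1" "i - 1"] 1 by auto
    with 1 show ?thesis using assms mono_i mono_j p0 i1 j1
      unfolding case1_fun_def case2_fun_def two_step_window_def step1_fun_def step2_fun_def
      by (auto simp: odd_minus_2_iff split: if_splits)
  next
    case 2
    then show ?thesis using assms mono_i mono_j p0 i1 j1
      unfolding case1_fun_def case2_fun_def two_step_window_def step1_fun_def step2_fun_def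
      by (auto simp: odd_minus_2_iff split: if_splits)
  next
    case 3
    then show ?thesis using assms mono_i mono_j p0 i1 j1
      unfolding case1_fun_def case2_fun_def two_step_window_def step1_fun_def step2_fun_def
      by (auto simp: odd_minus_2_iff split: if_splits)
  next
    case 4
    have "p j \<le> p (i + 2)" using m[of "i + 2" j] 4 by auto
    with 4 show ?thesis using assms mono_i mono_j p0 i1 j1
      unfolding case1_fun_def case2_fun_def two_step_window_def step1_fun_def step2_fun_def
      by (auto simp: odd_minus_2_iff split: if_splits)
  qed
qed

lemma two_step_window_minus_2:
  assumes "2 \<le> a3" "a3 \<le> a2" "a2 \<le> a1" "a1 \<le> a0 \<or> a0 = 0"
  shows "two_step_window b (a0 - 2) (a1 - 2) (a2 - 2) (a3 - 2) \<longleftrightarrow> two_step_window b a0 a1 a2 a3"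
  using assms unfolding two_step_window_def by (auto simp: odd_minus_2_iff)

text \<open>Here \<open>a0, \<dots>, a5\<close> are the parts \<open>\<lambda>\<^sub>j\<^sub>-\<^sub>1, \<dots>, \<lambda>\<^sub>j\<^sub>+\<^sub>4\<close> around two Case 2 moves at
  \<open>j\<close> and \<open>j + 2\<close>.\<close>

lemma two_step_windows_upper_first:
  "two_step_window b (a0 - 2) (a1 - 2) (a2 - 2) (a3 - 1) \<Longrightarrow> two_step_window b a2 a3 a4 a5 \<Longrightarrow>
   a3 \<le> a2 \<Longrightarrow> a2 \<le> a1 \<Longrightarrow> a1 \<le> a0 \<or> a0 = 0 \<Longrightarrow>
   two_step_window b a0 a1 a2 a3 \<and> two_step_window b (a2 - 1) a3 a4 a5"
  unfolding two_step_window_def by (auto simp: odd_minus_2_iff)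

lemma two_step_windows_lower_first:
  "two_step_window b a0 a1 a2 a3 \<Longrightarrow> two_step_window b (a2 - 1) a3 a4 a5 \<Longrightarrow>
   a1 \<le> a0 \<or> a0 = 0 \<Longrightarrow> a2 \<le> a1 \<Longrightarrow> a3 \<le> a2 \<Longrightarrow> a4 \<le> a3 \<Longrightarrow>
   two_step_window b a2 a3 a4 a5 \<and> two_step_window b (a0 - 2) (a1 - 2) (a2 - 2) (a3 - 1)"
  unfolding two_step_window_def by (auto simp: odd_minus_2_iff)

lemma case2_fun_step2_above:
  assumes "j + 3 \<le> i"
  shows "case2_fun b (step2_fun p j) i \<longleftrightarrow> case2_fun b p i"
proof -
  have "step2_fun p j k = p k" if "i - 1 \<le> k" for k
    using assms that by (auto simp: step2_fun_def)
  then show ?thesis by (simp add: case2_fun_def)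
qed

lemma case2_fun_step2_below:
  assumes p: "partition_fun p" and "j + 3 \<le> i" and "2 \<le> p (j + 2)"
  shows "case2_fun b (step2_fun p i) j \<longleftrightarrow> case2_fun b p j"
proof (cases "j = 0")
  case False
  have "step2_fun p i k = p k - 2" if "k \<le> j + 2" for k
    using assms(2) that by (simp add: step2_fun_def)
  moreover have "p (j + 2) \<le> p (j + 1)" "p (j + 1) \<le> p j"
    using partition_funD[OF p] False by auto
  ultimately show ?thesis
    using assms(3) two_step_window_minus_2 partition_fun_pred[OF p, of j] by (simp add: case2_fun_def)
qed (simp add: case2_fun_def)

lemma case2_case2_swap:
  assumes p: "partition_fun p" and "i \<noteq> j" and i: "case2_fun b p i" and j: "case2_fun b (step2_fun p i) j"
  shows "case2_fun b p j \<and> case2_fun b (step2_fun p j) i"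
proof -
  note m = partition_funD[OF p]
  have i1: "i \<ge> 1" and j1: "j \<ge> 1" using i j by (auto simp: case2_fun_def)
  consider "j + 3 \<le> i" | "i = j + 2" | "i = j + 1" | "j = i + 1" | "j = i + 2" | "i + 3 \<le> j"
    using assms(2) by linarith
  then show ?thesis
  proof cases
    case 1
    have "p i \<le> p (i - 1)" "p (i - 1) \<le> p (j + 2)" using m 1 by simp_all
    then have "2 \<le> p (j + 2)" using i by (auto simp: case2_fun_def two_step_window_def)
    then show ?thesis using i j 1 case2_fun_step2_above case2_fun_step2_below[OF p] by blast
  next
    case 2
    have shift: "j + 1 = i - 1" "j + 2 = i" using 2 by auto
    have vals: "step2_fun p i (j - 1) = p (j - 1) - 2" "step2_fun p i j = p j - 2"
      "step2_fun p i (i - 1) = p (i - 1) - 2" "step2_fun p i i = p i - 1"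
      "step2_fun p j (i - 1) = p (i - 1) - 1" "step2_fun p j i = p i"
      "step2_fun p j (i + 1) = p (i + 1)" "step2_fun p j (i + 2) = p (i + 2)"
      using 2 by (auto simp: step2_fun_def)
    have "two_step_window b (p (j - 1) - 2) (p j - 2) (p (i - 1) - 2) (p i - 1)"
      using j vals unfolding case2_fun_def shift by simp
    moreover have "two_step_window b (p (i - 1)) (p i) (p (i + 1)) (p (i + 2))"
      using i by (simp add: case2_fun_def)
    moreover have "p i \<le> p (i - 1)" "p (i - 1) \<le> p j" using m j1 2 by auto
    ultimately have "two_step_window b (p (j - 1)) (p j) (p (i - 1)) (p i) \<and>
        two_step_window b (p (i - 1) - 1) (p i) (p (i + 1)) (p (i + 2))"
      using two_step_windows_upper_first partition_fun_pred[OF p, of j] by blast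
    then show ?thesis using i1 j1 vals unfolding case2_fun_def shift by simp
  next
    case 3
    then show ?thesis using i j i1 j1 by (simp add: case2_fun_def step2_fun_def two_step_window_def)
  next
    case 4
    then show ?thesis using i j i1 j1 by (simp add: case2_fun_def step2_fun_def two_step_window_def)
  next
    case 5
    have shift: "i + 1 = j - 1" "i + 2 = j" using 5 by auto
    have vals: "step2_fun p i (j - 1) = p (j - 1) - 1" "step2_fun p i j = p j"
      "step2_fun p i (j + 1) = p (j + 1)" "step2_fun p i (j + 2) = p (j + 2)"
      "step2_fun p j (i - 1) = p (i - 1) - 2" "step2_fun p j i = p i - 2"
      "step2_fun p j (j - 1) = p (j - 1) - 2" "step2_fun p j j = p j - 1"
      using 5 by (auto simp: step2_fun_def)
    have "two_step_window b (p (i - 1)) (p i) (p (j - 1)) (p j)"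
      using i unfolding case2_fun_def shift by simp
    moreover have "two_step_window b (p (j - 1) - 1) (p j) (p (j + 1)) (p (j + 2))"
      using j vals by (simp add: case2_fun_def)
    moreover have "p (j - 1) \<le> p i" "p j \<le> p (j - 1)" "p (j + 1) \<le> p j"
      using m i1 5 by auto
    ultimately have "two_step_window b (p (j - 1)) (p j) (p (j + 1)) (p (j + 2)) \<and>
        two_step_window b (p (i - 1) - 2) (p i - 2) (p (j - 1) - 2) (p j - 1)"
      using two_step_windows_lower_first partition_fun_pred[OF p, of i] by blast
    then show ?thesis using i1 j1 vals unfolding case2_fun_def shift by simp
  next
    case 6
    have j': "case2_fun b p j" using j 6 case2_fun_step2_above by blast
    have "p j \<le> p (j - 1)" "p (j - 1) \<le> p (i + 2)" using m 6 by simp_all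
    then have "2 \<le> p (i + 2)" using j' by (auto simp: case2_fun_def two_step_window_def)
    then show ?thesis using i j' 6 case2_fun_step2_below[OF p] by blast
  qed
qed

lemma partition_fun_step1:
  assumes p: "partition_fun p" and i: "case1_fun p i"
  shows "partition_fun (step1_fun p i)"
proof (rule partition_funI)
  note m = partition_funD[OF p]
  show "step1_fun p i 0 = 0" using p by (simp add: partition_fun_def step1_fun_def)
  fix x y :: nat assume xy: "1 \<le> x" "x \<le> y"
  show "step1_fun p i y \<le> step1_fun p i x"
  proof (cases "x \<le> i \<and> i < y")
    case True
    have "p y \<le> p (i + 1)" "p i \<le> p x" using m[of "i + 1" y] m[of x i] True xy by auto
    then show ?thesis using True i by (auto simp: case1_fun_def step1_fun_def)
  next
    case False
    then show ?thesis using m[OF xy] xy by (auto simp: step1_fun_def)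
  qed
qed

lemma partition_fun_step2:
  assumes p: "partition_fun p" and i: "case2_fun b p i"
  shows "partition_fun (step2_fun p i)"
proof (rule partition_funI)
  note m = partition_funD[OF p]
  show "step2_fun p i 0 = 0" using p by (simp add: partition_fun_def step2_fun_def)
  have i': "1 \<le> i" "1 \<le> p (i + 1)" "p (i - 1) \<noteq> p i" "p (i + 1) \<noteq> p (i + 2)" "p i = p (i + 1)"
    using i by (auto simp: case2_fun_def two_step_window_def)
  fix x y :: nat assume xy: "1 \<le> x" "x \<le> y"
  consider "y < i \<or> i \<le> x \<and> y \<le> i + 1 \<or> i + 1 < x" | "x < i" "i \<le> y" "y \<le> i + 1"
    | "x < i" "i + 1 < y" | "i \<le> x" "x \<le> i + 1" "i + 1 < y"
    by linarith
  then show "step2_fun p i y \<le> step2_fun p i x"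
  proof cases
    case 1
    then show ?thesis using m[OF xy] xy by (auto simp: step2_fun_def)
  next
    case 2
    have "p (i - 1) \<le> p x" "p i \<le> p (i - 1)" "p y \<le> p i" using m[of x "i - 1"] m[of "i - 1" i] m[of i y] 2 xy by auto
    then show ?thesis using 2 i' by (simp add: step2_fun_def)
  next
    case 3
    have "p (i - 1) \<le> p x" "p i \<le> p (i - 1)" "p y \<le> p (i + 2)" "p (i + 2) \<le> p (i + 1)"
      using m[of x "i - 1"] m[of "i - 1" i] m[of "i + 2" y] m[of "i + 1" "i + 2"] 3 xy by auto
    then show ?thesis using 3 i' by (simp add: step2_fun_def)
  next
    case 4
    have "p (i + 1) \<le> p x" "p y \<le> p (i + 2)" "p (i + 2) \<le> p (i + 1)"
      using m[of x "i + 1"] m[of "i + 2" y] m[of "i + 1" "i + 2"] 4 xy by auto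
    then show ?thesis using 4 i' by (simp add: step2_fun_def)
  qed
qed

lemma partition_fun_ks_fun: "partition_fun p \<Longrightarrow> ks_allowed b p i \<Longrightarrow> partition_fun (ks_fun p i)"
  unfolding ks_allowed_def ks_fun_def using partition_fun_step1 partition_fun_step2 by auto

lemma ks_fun_swap:
  assumes p: "partition_fun p" and ij: "i \<noteq> j"
    and i: "ks_allowed b p i" and j: "ks_allowed b (ks_fun p i) j"
  shows "ks_allowed b p j \<and> ks_allowed b (ks_fun p j) i \<and> ks_fun (ks_fun p i) j = ks_fun (ks_fun p j) i"
proof (cases "case1_fun p i")
  case i1: True
  show ?thesis
  proof (cases "case1_fun (step1_fun p i) j")
    case True
    then show ?thesis using case1_case1_swap[OF p ij i1 True] i1 step1_step1_commute[of p i j]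
      by (simp add: ks_allowed_def ks_fun_def)
  next
    case False
    then have "case2_fun b (step1_fun p i) j" using j i1 by (simp add: ks_allowed_def ks_fun_def)
    then show ?thesis using case1_case2_swap[OF p ij i1] i1 False step2_step1_commute[of p i j]
        case1_fun_not_case2_fun[of p j b]
      by (auto simp: ks_allowed_def ks_fun_def)
  qed
next
  case i2: False
  then have i2': "case2_fun b p i" using i by (simp add: ks_allowed_def)
  show ?thesis
  proof (cases "case1_fun (step2_fun p i) j")
    case True
    then show ?thesis using case2_case1_swap[OF p ij i2' True] i2 step2_step1_commute[of p j i]
        case1_fun_not_case2_fun[of "step1_fun p j" i b]
      by (auto simp: ks_allowed_def ks_fun_def)
  next
    case False
    then have "case2_fun b (step2_fun p i) j" using j i2 by (simp add: ks_allowed_def ks_fun_def)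
    then show ?thesis using case2_case2_swap[OF p ij i2'] i2 False step2_step2_commute[of p i j]
        case1_fun_not_case2_fun[of p j b] case1_fun_not_case2_fun[of "step2_fun p j" i b]
      by (auto simp: ks_allowed_def ks_fun_def)
  qed
qed

definition is_partition :: "nat list \<Rightarrow> bool" where
  "is_partition lam \<longleftrightarrow> sorted_wrt (\<ge>) lam \<and> 0 \<notin> set lam"

lemma part_0 [simp]: "part lam 0 = 0"
  by (simp add: part_def)

lemma part_beyond: "length lam < k \<Longrightarrow> part lam k = 0"
  by (simp add: part_def)

lemma part_Suc: "k < length lam \<Longrightarrow> part lam (Suc k) = lam ! k"
  by (simp add: part_def)

lemma part_pos:
  assumes "is_partition lam" "1 \<le> k" "k \<le> length lam"
  shows "1 \<le> part lam k"
proof -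
  have "lam ! (k - 1) \<in> set lam" using assms(2,3) by simp
  then have "lam ! (k - 1) \<noteq> 0" using assms(1) unfolding is_partition_def by metis
  then show ?thesis using assms(2,3) by (simp add: part_def)
qed

lemma partition_fun_part: "is_partition lam \<Longrightarrow> partition_fun (part lam)"
proof (rule partition_funI)
  fix x y :: nat assume lam: "is_partition lam" and xy: "1 \<le> x" "x \<le> y"
  show "part lam y \<le> part lam x"
  proof (cases "y \<le> length lam")
    case True
    then have "lam ! (y - 1) \<le> lam ! (x - 1)"
      using lam xy unfolding is_partition_def sorted_wrt_iff_nth_less
      by (cases "x = y") (auto dest: spec[of _ "x - 1"])
    then show ?thesis using True xy by (simp add: part_def)
  qed (simp add: part_def)
qed simp

lemma part_inject:
  assumes "is_partition l1" "is_partition l2" "part l1 = part l2"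
  shows "l1 = l2"
proof -
  have length_le: "length la \<le> length lb" if "is_partition la" "part la = part lb" for la lb
  proof (rule ccontr)
    assume "\<not> length la \<le> length lb"
    then have "1 \<le> part la (length la)" "part lb (length la) = 0"
      using part_pos[OF that(1)] part_beyond[of lb] by auto
    then show False using that(2) by simp
  qed
  have "length l1 = length l2"
    using length_le[of l1 l2] length_le[of l2 l1] assms by simp
  then show ?thesis
    using assms(3) part_Suc by (metis nth_equalityI)
qed

lemma sorted_desc_eq_filter_pos_append_zeros:
  "sorted_wrt (\<ge>) (L :: nat list) \<Longrightarrow> \<exists>m. L = filter (\<lambda>x. 0 < x) L @ replicate m 0"
proof (induction L)
  case (Cons x L)
  then obtain m where m: "L = filter (\<lambda>x. 0 < x) L @ replicate m 0" by auto
  show ?case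
  proof (cases "x > 0")
    case True
    then show ?thesis using m by auto
  next
    case False
    then have "\<forall>y\<in>set L. y = 0" using Cons.prems by auto
    then have "filter (\<lambda>x. 0 < x) (x # L) = []" "x # L = replicate (Suc (length L)) 0" using False
      by (auto simp: filter_empty_conv intro: replicate_eqI)
    then show ?thesis by (metis append_Nil)
  qed
qed simp

lemma part_filter_pos: "sorted_wrt (\<ge>) (L :: nat list) \<Longrightarrow> part (filter (\<lambda>x. 0 < x) L) = part L"
proof -
  have "part (xs @ replicate m 0) = part xs" for xs m
    by (auto simp: fun_eq_iff part_def nth_append)
  then show "sorted_wrt (\<ge>) L \<Longrightarrow> ?thesis"
    using sorted_desc_eq_filter_pos_append_zeros by metis
qed

lemma partition_fun_list:
  assumes q: "partition_fun q" and vanish: "\<And>k. n < k \<Longrightarrow> q k = 0"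
  defines "L \<equiv> filter (\<lambda>x. 0 < x) (map (\<lambda>j. q (Suc j)) [0..<n])"
  shows "is_partition L \<and> part L = q"
proof -
  have sorted: "sorted_wrt (\<ge>) (map (\<lambda>j. q (Suc j)) [0..<n])"
    unfolding sorted_wrt_iff_nth_less using partition_funD[OF q] by auto
  have "part (map (\<lambda>j. q (Suc j)) [0..<n]) k = q k" for k
    using vanish q by (cases k) (auto simp: part_def partition_fun_def)
  then show ?thesis
    unfolding L_def is_partition_def
    using sorted part_filter_pos[OF sorted] by (auto intro: sorted_wrt_filter)
qed

lemma case1_iff_case1_fun: "is_partition lam \<Longrightarrow> case1 lam i \<longleftrightarrow> case1_fun (part lam) i"
  unfolding case1_def case1_fun_def by (cases "i \<le> length lam") (auto simp: part_beyond)

lemma sign_eq_minus_one_iff: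
  "(eps :: int) = 1 \<or> eps = -1 \<Longrightarrow> eps * (-1) ^ m = -1 \<longleftrightarrow> odd m = (eps = 1)"
  by (auto simp: minus_one_power_iff)

lemma case2_iff_case2_fun:
  assumes eps: "eps = 1 \<or> eps = -1" and lam: "is_partition lam"
  shows "case2 eps lam i \<longleftrightarrow> case2_fun (eps = 1) (part lam) i"
proof -
  have "i < length lam \<longleftrightarrow> 1 \<le> part lam (i + 1)"
    using part_pos[OF lam, of "i + 1"] part_beyond[of lam "i + 1"] by (cases "i < length lam") auto
  then show ?thesis
    unfolding case2_def two_step_def case2_fun_def two_step_window_def sign_eq_minus_one_iff[OF eps]
    by auto
qed

lemma ks_allowed_iff:
  "eps = 1 \<or> eps = -1 \<Longrightarrow> is_partition lam \<Longrightarrow>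
   case1 lam i \<or> case2 eps lam i \<longleftrightarrow> ks_allowed (eps = 1) (part lam) i"
  using case1_iff_case1_fun case2_iff_case2_fun by (auto simp: ks_allowed_def)

lemma ks_step_part:
  assumes eps: "eps = 1 \<or> eps = -1" and lam: "is_partition lam"
    and i: "case1 lam i \<or> case2 eps lam i"
  shows "is_partition (ks_step eps lam i) \<and> part (ks_step eps lam i) = ks_fun (part lam) i"
proof -
  let ?q = "ks_fun (part lam) i"
  have q: "partition_fun ?q"
    using partition_fun_ks_fun partition_fun_part[OF lam] ks_allowed_iff[OF eps lam] i by blast
  have "?q k = 0" if "length lam < k" for k
    using that by (simp add: ks_fun_def step1_fun_def step2_fun_def part_beyond)
  moreover have "ks_step eps lam i = filter (\<lambda>x. 0 < x) (map (\<lambda>j. ?q (Suc j)) [0..<length lam])"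
  proof (cases "case1 lam i")
    case True
    then have "ks_step eps lam i = filter (\<lambda>x. 0 < x)
        (map (\<lambda>j. if j < i then lam ! j - 2 else lam ! j) [0..<length lam])"
      by (simp add: ks_step_def)
    also have "\<dots> = filter (\<lambda>x. 0 < x) (map (\<lambda>j. ?q (Suc j)) [0..<length lam])"
      using True case1_iff_case1_fun[OF lam]
      by (intro arg_cong[where f = "filter (\<lambda>x. 0 < x)"] map_cong)
        (simp_all add: ks_fun_def step1_fun_def part_Suc)
    finally show ?thesis .
  next
    case False
    then have "ks_step eps lam i = filter (\<lambda>x. 0 < x) (map (\<lambda>j. if j + 1 < i then lam ! j - 2
        else if j < i + 1 then lam ! j - 1 else lam ! j) [0..<length lam])"
      using i by (simp add: ks_step_def)
    also have "\<dots> = filter (\<lambda>x. 0 < x) (map (\<lambda>j. ?q (Suc j)) [0..<length lam])"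
      using False case1_iff_case1_fun[OF lam]
      by (intro arg_cong[where f = "filter (\<lambda>x. 0 < x)"] map_cong)
        (simp_all add: ks_fun_def step2_fun_def part_Suc)
    finally show ?thesis .
  qed
  ultimately show ?thesis using partition_fun_list[OF q] by simp
qed

lemma ks_step_swap:
  assumes eps: "eps = 1 \<or> eps = -1" and lam: "is_partition lam" and ij: "i \<noteq> j"
    and i: "case1 lam i \<or> case2 eps lam i"
    and j: "case1 (ks_step eps lam i) j \<or> case2 eps (ks_step eps lam i) j"
  shows "(case1 lam j \<or> case2 eps lam j) \<and>
    (case1 (ks_step eps lam j) i \<or> case2 eps (ks_step eps lam j) i) \<and>
    ks_step eps (ks_step eps lam i) j = ks_step eps (ks_step eps lam j) i"
proof -
  let ?p = "part lam" and ?b = "eps = 1"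
  obtain lam_i: "is_partition (ks_step eps lam i)" and part_i: "part (ks_step eps lam i) = ks_fun ?p i"
    using ks_step_part[OF eps lam i] by blast
  have "ks_allowed ?b ?p i" using ks_allowed_iff[OF eps lam] i by simp
  moreover have "ks_allowed ?b (ks_fun ?p i) j" using ks_allowed_iff[OF eps lam_i] j part_i by simp
  ultimately have j_p: "ks_allowed ?b ?p j" and i_p: "ks_allowed ?b (ks_fun ?p j) i"
    and commute: "ks_fun (ks_fun ?p i) j = ks_fun (ks_fun ?p j) i"
    using ks_fun_swap[OF partition_fun_part[OF lam] ij] by blast+
  have j': "case1 lam j \<or> case2 eps lam j" using ks_allowed_iff[OF eps lam] j_p by simp
  obtain lam_j: "is_partition (ks_step eps lam j)" and part_j: "part (ks_step eps lam j) = ks_fun ?p j"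
    using ks_step_part[OF eps lam j'] by blast
  have i': "case1 (ks_step eps lam j) i \<or> case2 eps (ks_step eps lam j) i"
    using ks_allowed_iff[OF eps lam_j] i_p part_j by simp
  have "is_partition (ks_step eps (ks_step eps lam i) j)" "is_partition (ks_step eps (ks_step eps lam j) i)"
    and "part (ks_step eps (ks_step eps lam i) j) = part (ks_step eps (ks_step eps lam j) i)"
    using ks_step_part[OF eps lam_i j] ks_step_part[OF eps lam_j i'] part_i part_j commute by simp_all
  then have "ks_step eps (ks_step eps lam i) j = ks_step eps (ks_step eps lam j) i"
    by (rule part_inject)
  with j' i' show ?thesis by blast
qed

lemma is_partition_ks_step:
  "eps = 1 \<or> eps = -1 \<Longrightarrow> is_partition lam \<Longrightarrow> case1 lam i \<or> case2 eps lam i \<Longrightarrow>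
   is_partition (ks_step eps lam i)"
  using ks_step_part by blast

lemma admissible_swap_adjacent:
  assumes eps: "eps = 1 \<or> eps = -1"
  shows "is_partition lam \<Longrightarrow> admissible eps lam (xs @ i # j # ys) \<Longrightarrow> admissible eps lam (xs @ j # i # ys)"
proof (induction xs arbitrary: lam)
  case Nil
  show ?case
  proof (cases "i = j")
    case False
    with Nil ks_step_swap[OF eps Nil.prems(1) False] show ?thesis by auto
  qed (use Nil in simp)
next
  case (Cons x xs)
  then show ?case using is_partition_ks_step[OF eps] by auto
qed

lemma admissible_move_to_front:
  assumes eps: "eps = 1 \<or> eps = -1"
  shows "is_partition lam \<Longrightarrow> admissible eps lam (xs @ y # ys) \<Longrightarrow> admissible eps lam (y # xs @ ys)"
proof (induction xs arbitrary: ys rule: rev_induct)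
  case (snoc x xs)
  then have "admissible eps lam (xs @ y # x # ys)"
    using admissible_swap_adjacent[OF eps] by simp
  then show ?case using snoc by simp
qed simp

lemma admissible_mset_eq:
  assumes eps: "eps = 1 \<or> eps = -1"
  shows "is_partition lam \<Longrightarrow> admissible eps lam xs \<Longrightarrow> mset ys = mset xs \<Longrightarrow> admissible eps lam ys"
proof (induction ys arbitrary: xs lam)
  case (Cons y ys)
  then have "y \<in> set xs" by (metis list.set_intros(1) set_mset_mset)
  then obtain as bs where xs: "xs = as @ y # bs" by (meson split_list)
  then have "admissible eps lam (y # as @ bs)"
    using admissible_move_to_front[OF eps Cons.prems(1)] Cons.prems(2) by simp
  then have y: "case1 lam y \<or> case2 eps lam y" and rest: "admissible eps (ks_step eps lam y) (as @ bs)"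
    by auto
  have "admissible eps (ks_step eps lam y) ys"
    using Cons.IH[OF is_partition_ks_step[OF eps Cons.prems(1) y] rest] Cons.prems(3) xs by simp
  with y show ?case by simp
qed simp

theorem mainTheorem12:
  fixes eps :: int and N :: nat and lam :: "nat list" and "is" :: "nat list"
  assumes "eps = 1 \<or> eps = -1"
    and "in_P eps N lam"
    and "admissible eps lam is"
    and "eps = 1 \<longrightarrow> int N - 2 * int (sum_list is) \<noteq> 2"
  shows "\<forall>\<sigma>. \<sigma> permutes {0..<length is} \<longrightarrow>
           admissible eps lam (map (\<lambda>k. is ! \<sigma> k) [0..<length is])"
proof (intro allI impI)
  fix \<sigma> assume "\<sigma> permutes {0..<length is}"
  then have "mset (map (\<lambda>k. is ! \<sigma> k) [0..<length is]) = mset is"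
    using mset_permute_list[of \<sigma> "is"] by (simp add: atLeast0LessThan permute_list_def)
  moreover have "is_partition lam"
    using assms(2) unfolding in_P_def is_partition_def by auto
  ultimately show "admissible eps lam (map (\<lambda>k. is ! \<sigma> k) [0..<length is])"
    using admissible_mset_eq[OF assms(1)] assms(3) by blast
qed

end
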